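(* Let $\delta>0$ and let $U\in C^1(-1,-1+\delta)$ satisfy $(1-x^2)U'+2xU+\frac12U^2=P_c(x)$ on $(-1,-1+\delta)$ for some $c_1,c_2,c_3\in\mathbb{R}$. Then $c_1\ge-1$, the limit $U(-1):=\lim_{x\to-1^+}U(x)$ exists and is finite, and $U(-1)=\tau_1(c_1)$ or $U(-1)=\tau_2(c_1)$.
   Context: $P_c(x):=c_1(1-x)+c_2(1+x)+c_3(1-x^2)$ for $c=(c_1,c_2,c_3)$. $\tau_1(c_1):=2-2\sqrt{1+c_1}$, $\tau_2(c_1):=2+2\sqrt{1+c_1}$. *)

theory Defs
  imports "HOL-Analysis.Analysis"
begin

definition P :: "real \<Rightarrow> real \<Rightarrow> real \<Rightarrow> real \<Rightarrow> real" where
  "P c1 c2 c3 x = c1 * (1 - x) + c2 * (1 + x) + c3 * (1 - x\<^sup>2)"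

definition tau1 :: "real \<Rightarrow> real" where
  "tau1 c1 = 2 - 2 * sqrt (1 + c1)"

definition tau2 :: "real \<Rightarrow> real" where
  "tau2 c1 = 2 + 2 * sqrt (1 + c1)"

end

theory Submission
  imports Defs "HOL-Real_Asymp.Real_Asymp"
begin

text \<open>
  Solve the equation for \<open>(1 - x\<^sup>2) U'\<close>: the right-hand side \<open>R(x, u)\<close> tends, as
  \<open>x \<rightarrow> -1\<close>, to \<open>g(u) = 2 c\<^sub>1 + 2 u - u\<^sup>2/2\<close>, whose roots are \<open>\<tau>\<^sub>1(c\<^sub>1)\<close> and
  \<open>\<tau>\<^sub>2(c\<^sub>1)\<close> (real only when \<open>c\<^sub>1 \<ge> -1\<close>). Since \<open>1 - x\<^sup>2\<close> vanishes only to first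
  order at \<open>-1\<close>, a bound \<open>R \<le> -\<kappa> < 0\<close> near \<open>-1\<close> gives \<open>U' \<le> -\<kappa> / (2 (1 + x))\<close>, so
  \<open>U \<rightarrow> +\<infinity>\<close> like \<open>-\<kappa> log (1 + x) / 2\<close>. For large \<open>|U|\<close> the term \<open>-U\<^sup>2/2\<close>
  dominates \<open>R\<close>, and this drift (applied to \<open>U\<close>, or to \<open>-1/U\<close> against blow-up to
  \<open>+\<infinity>\<close>) shows that \<open>U\<close> stays bounded. At a level \<open>v\<close> with \<open>g(v) \<noteq> 0\<close> the sign of
  \<open>U'\<close> on \<open>{U = v}\<close> is fixed near \<open>-1\<close>, so \<open>U\<close> eventually stays on one side of \<open>v\<close>;
  with only two exceptional levels this forces convergence, and the drift again
  shows that the limit is a root of \<open>g\<close>.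
\<close>

lemma filterlim_at_top_if_deriv_le_neg_inverse:
  fixes f f' :: "real \<Rightarrow> real" and a \<kappa> :: real
  assumes "\<kappa> > 0"
    and "\<forall>\<^sub>F x in at_right a. (f has_real_derivative f' x) (at x) \<and> f' x \<le> -\<kappa> / (x - a)"
  shows "filterlim f at_top (at_right a)"
proof -
  obtain b where "a < b" and hb: "\<And>y. a < y \<Longrightarrow> y < b \<Longrightarrow>
      (f has_real_derivative f' y) (at y) \<and> f' y \<le> -\<kappa> / (y - a)"
    using assms(2) unfolding eventually_at_right_field by auto
  define c where "c = (a + b) / 2"
  have "a < c" "c < b" using \<open>a < b\<close> by (auto simp: c_def)
  have lower: "f c + \<kappa> * ln (c - a) - \<kappa> * ln (x - a) \<le> f x" if "a < x" "x \<le> c" for x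
  proof -
    let ?F = "\<lambda>y. f y + \<kappa> * ln (y - a)"
    have "?F c \<le> ?F x"
    proof (rule DERIV_nonpos_imp_nonincreasing[OF \<open>x \<le> c\<close>])
      fix y assume "x \<le> y" "y \<le> c"
      then have y: "a < y" "y < b" using that \<open>c < b\<close> by auto
      then have "(?F has_real_derivative f' y + \<kappa> * (1 / (y - a))) (at y)"
        using hb by (auto intro!: derivative_eq_intros)
      moreover have "f' y + \<kappa> * (1 / (y - a)) \<le> 0" using hb[OF y] by simp
      ultimately show "\<exists>l. (?F has_real_derivative l) (at y) \<and> l \<le> 0" by blast
    qed
    then show ?thesis by simp
  qed
  have "filterlim (\<lambda>x. f c + \<kappa> * ln (c - a) - \<kappa> * ln (x - a)) at_top (at_right a)"
    using \<open>\<kappa> > 0\<close> by real_asymp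
  moreover have "\<forall>\<^sub>F x in at_right a. f c + \<kappa> * ln (c - a) - \<kappa> * ln (x - a) \<le> f x"
    using eventually_at_right_real[OF \<open>a < c\<close>] by eventually_elim (use lower in auto)
  ultimately show ?thesis by (rule filterlim_at_top_mono)
qed

lemma ge_level_preserved_if_deriv_pos_at_level:
  fixes f f' :: "real \<Rightarrow> real"
  assumes "x1 \<le> x2"
    and deriv: "\<And>x. x1 \<le> x \<Longrightarrow> x \<le> x2 \<Longrightarrow> (f has_real_derivative f' x) (at x)"
    and pos: "\<And>x. x1 \<le> x \<Longrightarrow> x \<le> x2 \<Longrightarrow> f x = v \<Longrightarrow> f' x > 0"
    and "v \<le> f x1"
  shows "v \<le> f x2"
proof (rule ccontr)
  assume "\<not> v \<le> f x2"
  have cont: "\<forall>x. x1 \<le> x \<and> x \<le> x2 \<longrightarrow> isCont f x"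
    using deriv DERIV_isCont by blast
  define Z where "Z = {x1..x2} \<inter> f -` {v..}"
  have "closed Z"
    unfolding Z_def using cont
    by (intro continuous_closed_preimage) (auto intro: continuous_at_imp_continuous_on)
  moreover have "x1 \<in> Z" "bdd_above Z"
    using assms by (auto simp: Z_def intro: bdd_aboveI[of _ x2])
  ultimately have "Sup Z \<in> Z"
    using closed_contains_Sup by blast
  define \<sigma> where "\<sigma> = Sup Z"
  have last: "x \<le> \<sigma>" if "x \<in> Z" for x
    using \<open>bdd_above Z\<close> that by (simp add: \<sigma>_def cSup_upper)
  have \<sigma>: "x1 \<le> \<sigma>" "\<sigma> < x2" "v \<le> f \<sigma>"
    using \<open>Sup Z \<in> Z\<close> \<open>\<not> v \<le> f x2\<close> by (auto simp: Z_def \<sigma>_def order.order_iff_strict)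
  have "f \<sigma> = v"
  proof -
    obtain y where "\<sigma> \<le> y" "y \<le> x2" "f y = v"
      using IVT2[of f x2 v \<sigma>] \<sigma> \<open>\<not> v \<le> f x2\<close> cont by auto
    with last[of y] \<sigma> show ?thesis by (force simp: Z_def)
  qed
  then have "f' \<sigma> > 0" using pos \<sigma> by simp
  then obtain e where "e > 0" and inc: "\<And>h. h > 0 \<Longrightarrow> h < e \<Longrightarrow> f \<sigma> < f (\<sigma> + h)"
    using DERIV_pos_inc_right deriv \<sigma> by (metis less_imp_le)
  define h where "h = min (e/2) (x2 - \<sigma>)"
  have "h > 0" "h < e" "\<sigma> + h \<le> x2" using \<open>e > 0\<close> \<sigma> by (auto simp: h_def)
  then have "\<sigma> + h \<in> Z" using inc[of h] \<open>f \<sigma> = v\<close> \<sigma> by (auto simp: Z_def)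
  then show False using last \<open>h > 0\<close> by fastforce
qed

lemma eventually_le_or_ge_if_deriv_pos_at_level:
  fixes f f' :: "real \<Rightarrow> real"
  assumes "\<forall>\<^sub>F x in at_right a. (f has_real_derivative f' x) (at x) \<and> (f x = v \<longrightarrow> f' x > 0)"
  shows "(\<forall>\<^sub>F x in at_right a. f x \<le> v) \<or> (\<forall>\<^sub>F x in at_right a. v \<le> f x)"
proof -
  obtain b where "a < b" and hb: "\<And>y. a < y \<Longrightarrow> y < b \<Longrightarrow>
      (f has_real_derivative f' y) (at y) \<and> (f y = v \<longrightarrow> f' y > 0)"
    using assms unfolding eventually_at_right_field by auto
  show ?thesis
  proof (cases "\<exists>x2. a < x2 \<and> x2 < b \<and> f x2 < v")
    case True
    then obtain x2 where x2: "a < x2" "x2 < b" "f x2 < v" by blast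
    have "f x1 \<le> v" if "a < x1" "x1 < x2" for x1
      using ge_level_preserved_if_deriv_pos_at_level[of x1 x2 f f' v] that x2 hb by force
    then have "\<forall>\<^sub>F x in at_right a. f x \<le> v"
      unfolding eventually_at_right_field using x2 by auto
    then show ?thesis ..
  next
    case False
    then have "\<forall>\<^sub>F x in at_right a. v \<le> f x"
      unfolding eventually_at_right_field using \<open>a < b\<close> by (meson not_less)
    then show ?thesis ..
  qed
qed

lemma eventually_le_or_ge_if_deriv_neg_at_level:
  fixes f f' :: "real \<Rightarrow> real"
  assumes "\<forall>\<^sub>F x in at_right a. (f has_real_derivative f' x) (at x) \<and> (f x = v \<longrightarrow> f' x < 0)"
  shows "(\<forall>\<^sub>F x in at_right a. f x \<le> v) \<or> (\<forall>\<^sub>F x in at_right a. v \<le> f x)"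
proof -
  have "\<forall>\<^sub>F x in at_right a. ((\<lambda>x. - f x) has_real_derivative - f' x) (at x) \<and> (- f x = - v \<longrightarrow> - f' x > 0)"
    using assms by eventually_elim (auto intro: derivative_intros)
  from eventually_le_or_ge_if_deriv_pos_at_level[OF this] show ?thesis by auto
qed

lemma tendsto_if_eventually_le_or_ge:
  fixes f :: "'a \<Rightarrow> real"
  assumes "F \<noteq> bot" "finite Z"
    and le_or_ge: "\<And>v. v \<notin> Z \<Longrightarrow> (\<forall>\<^sub>F x in F. f x \<le> v) \<or> (\<forall>\<^sub>F x in F. v \<le> f x)"
    and upper: "\<forall>\<^sub>F x in F. f x \<le> B" and lower: "\<forall>\<^sub>F x in F. A \<le> f x"
  shows "\<exists>L. (f \<longlongrightarrow> L) F"
proof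
  define S where "S = {v. \<forall>\<^sub>F x in F. f x \<le> v}"
  have "A \<le> v" if "v \<in> S" for v
  proof -
    from that have "\<forall>\<^sub>F x in F. f x \<le> v" by (simp add: S_def)
    with lower have "\<forall>\<^sub>F x in F. A \<le> v" by eventually_elim auto
    then show ?thesis using \<open>F \<noteq> bot\<close> by (simp add: eventually_const_iff)
  qed
  then have "bdd_below S" by (rule bdd_belowI)
  have "B \<in> S" using upper by (simp add: S_def)
  show "(f \<longlongrightarrow> Inf S) F"
  proof (rule order_tendstoI)
    fix u assume "Inf S < u"
    then obtain v where "v \<in> S" "v < u"
      using cInf_lessD[of S u] \<open>B \<in> S\<close> by blast
    then show "\<forall>\<^sub>F x in F. f x < u"
      unfolding S_def by (auto elim: eventually_mono)
  next
    fix l assume "l < Inf S"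
    have "infinite ({l<..<Inf S} - Z)"
      using \<open>l < Inf S\<close> \<open>finite Z\<close> by (simp add: infinite_Ioo)
    then obtain w where w: "l < w" "w < Inf S" "w \<notin> Z"
      by (metis Diff_iff finite.emptyI greaterThanLessThan_iff ex_in_conv)
    have "w \<notin> S" using w \<open>bdd_below S\<close> cInf_lower by fastforce
    then have "\<forall>\<^sub>F x in F. w \<le> f x" using le_or_ge[OF \<open>w \<notin> Z\<close>] by (auto simp: S_def)
    then show "\<forall>\<^sub>F x in F. l < f x" using \<open>l < w\<close> by (auto elim: eventually_mono)
  qed
qed

lemma le_neg_inverse_if_weighted_le:
  fixes x w \<kappa> :: real
  assumes "-1 < x" "x < 1" "(1 - x\<^sup>2) * w \<le> -\<kappa>" "\<kappa> > 0"
  shows "w \<le> -(\<kappa>/2) / (x + 1)"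
proof -
  have "1 - x\<^sup>2 > 0" using assms by (simp add: abs_square_less_1)
  then have "w < 0" using assms by (smt (verit) mult_nonneg_nonneg)
  have "2 * (x + 1) - (1 - x\<^sup>2) = (x + 1)\<^sup>2" by (simp add: power2_eq_square algebra_simps)
  then have "1 - x\<^sup>2 \<le> 2 * (x + 1)" by (smt (verit) zero_le_power2)
  then have "2 * (x + 1) * w \<le> -\<kappa>"
    using \<open>w < 0\<close> assms(3) by (smt (verit) mult_right_mono_neg)
  then show ?thesis using assms(1) by (simp add: field_simps)
qed

lemma quadratic_le_neg_quarter_square:
  fixes p t u A :: real
  assumes "p \<le> A" "\<bar>t\<bar> \<le> 2" "8 + \<bar>A\<bar> \<le> \<bar>u\<bar>"
  shows "p + t * u - u\<^sup>2 / 2 \<le> - u\<^sup>2 / 4"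
proof -
  have "t * u \<le> 2 * \<bar>u\<bar>"
    using assms(2) by (metis abs_ge_self abs_mult abs_of_nonneg mult_right_mono abs_ge_zero order.trans)
  moreover have "(8 + \<bar>A\<bar>) * \<bar>u\<bar> \<le> \<bar>u\<bar> * \<bar>u\<bar>" using assms(3) by (intro mult_right_mono) auto
  moreover have "\<bar>A\<bar> * 8 \<le> \<bar>A\<bar> * \<bar>u\<bar>" using assms(3) by (intro mult_left_mono) auto
  moreover have "u\<^sup>2 = \<bar>u\<bar> * \<bar>u\<bar>" by (simp add: power2_eq_square abs_mult_self_eq)
  ultimately show ?thesis using assms(1) by (simp add: algebra_simps)
qed

definition boundary_quadratic :: "real \<Rightarrow> real \<Rightarrow> real" where
  "boundary_quadratic c1 u = 2 * c1 + 2 * u - u\<^sup>2 / 2"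

lemma boundary_quadratic_root:
  assumes "boundary_quadratic c1 L = 0"
  shows "c1 \<ge> -1 \<and> (L = tau1 c1 \<or> L = tau2 c1)"
proof -
  have sq: "1 + c1 = ((L - 2) / 2)\<^sup>2"
    using assms by (simp add: boundary_quadratic_def power2_eq_square field_simps)
  then have "c1 \<ge> -1" using zero_le_power2[of "(L - 2) / 2"] by linarith
  from sq have "sqrt (1 + c1) = \<bar>L - 2\<bar> / 2" by (simp add: real_sqrt_abs)
  then have "L = tau1 c1 \<or> L = tau2 c1"
    unfolding tau1_def tau2_def by (cases "L \<ge> 2") (simp_all add: field_simps)
  with \<open>c1 \<ge> -1\<close> show ?thesis ..
qed

locale riccati_near_minus_one =
  fixes \<delta> c1 c2 c3 :: real and U U' :: "real \<Rightarrow> real"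
  assumes delta_pos: "\<delta> > 0"
    and has_deriv: "\<And>x. x \<in> {-1<..<-1+\<delta>} \<Longrightarrow> (U has_real_derivative U' x) (at x)"
    and riccati: "\<And>x. x \<in> {-1<..<-1+\<delta>} \<Longrightarrow>
               (1 - x\<^sup>2) * U' x + 2 * x * U x + 1/2 * (U x)\<^sup>2 = P c1 c2 c3 x"
begin

definition rhs :: "real \<Rightarrow> real \<Rightarrow> real" where
  "rhs x u = P c1 c2 c3 x - 2 * x * u - u\<^sup>2 / 2"

definition bound :: real where
  "bound = 8 + \<bar>2 * c1 + 1\<bar>"

lemma eventually_riccati:
  "\<forall>\<^sub>F x in at_right (-1). -1 < x \<and> x < 0 \<and> (U has_real_derivative U' x) (at x) \<and>
     (1 - x\<^sup>2) * U' x = rhs x (U x)"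
proof -
  have "\<forall>\<^sub>F x in at_right (-1). x \<in> {-1<..<min (-1 + \<delta>) 0}"
    using delta_pos by (intro eventually_at_right_real) auto
  then show ?thesis
  proof eventually_elim
    case (elim x)
    then have x: "x \<in> {-1<..<-1+\<delta>}" by simp
    have "(1 - x\<^sup>2) * U' x = rhs x (U x)"
      using riccati[OF x] unfolding rhs_def by linarith
    with x elim has_deriv show ?case by simp
  qed
qed

lemma tendsto_rhs:
  assumes "(f \<longlongrightarrow> u) (at_right (-1))"
  shows "((\<lambda>x. rhs x (f x)) \<longlongrightarrow> boundary_quadratic c1 u) (at_right (-1))"
proof -
  have "((\<lambda>x. rhs x (f x)) \<longlongrightarrow> rhs (-1) u) (at_right (-1))"
    unfolding rhs_def P_def by (intro tendsto_intros assms) simp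
  then show ?thesis by (simp add: rhs_def P_def boundary_quadratic_def ac_simps)
qed

lemma bound_ge_8: "8 \<le> bound"
  by (simp add: bound_def)

lemma boundary_quadratic_neg:
  assumes "bound \<le> \<bar>u\<bar>"
  shows "boundary_quadratic c1 u < 0"
proof -
  have "boundary_quadratic c1 u \<le> - u\<^sup>2 / 4"
    using quadratic_le_neg_quarter_square[of "2 * c1" "2 * c1 + 1" 2 u] assms
    by (simp add: boundary_quadratic_def bound_def)
  moreover have "u\<^sup>2 > 0" using assms bound_ge_8 by auto
  ultimately show ?thesis by linarith
qed

lemma eventually_rhs_le_neg_quarter_square:
  "\<forall>\<^sub>F x in at_right (-1). \<forall>u. bound \<le> \<bar>u\<bar> \<longrightarrow> rhs x u \<le> - u\<^sup>2 / 4"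
proof -
  have "\<forall>\<^sub>F x in at_right (-1). rhs x 0 < 2 * c1 + 1"
    using order_tendstoD(2)[OF tendsto_rhs[OF tendsto_const[of 0]]]
    by (simp add: boundary_quadratic_def)
  with eventually_riccati show ?thesis
  proof eventually_elim
    case (elim x)
    have "P c1 c2 c3 x + (-2 * x) * u - u\<^sup>2 / 2 \<le> - u\<^sup>2 / 4" if "bound \<le> \<bar>u\<bar>" for u
      using elim that by (intro quadratic_le_neg_quarter_square) (auto simp: rhs_def bound_def)
    then show ?case by (simp add: rhs_def)
  qed
qed

lemma filterlim_at_top_if_rhs_le:
  assumes "\<kappa> > 0" "\<forall>\<^sub>F x in at_right (-1). rhs x (U x) \<le> -\<kappa>"
  shows "filterlim U at_top (at_right (-1))"
proof (rule filterlim_at_top_if_deriv_le_neg_inverse)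
  show "\<forall>\<^sub>F x in at_right (-1). (U has_real_derivative U' x) (at x) \<and> U' x \<le> -(\<kappa>/2) / (x - -1)"
    using assms(2) eventually_riccati
    by eventually_elim (use le_neg_inverse_if_weighted_le \<open>\<kappa> > 0\<close> in auto)
qed (use assms in simp)

lemma filterlim_neg_at_top_if_rhs_ge:
  assumes "\<kappa> > 0" "\<forall>\<^sub>F x in at_right (-1). \<kappa> \<le> rhs x (U x)"
  shows "filterlim (\<lambda>x. - U x) at_top (at_right (-1))"
proof (rule filterlim_at_top_if_deriv_le_neg_inverse)
  show "\<forall>\<^sub>F x in at_right (-1). ((\<lambda>x. - U x) has_real_derivative - U' x) (at x) \<and>
      - U' x \<le> -(\<kappa>/2) / (x - -1)"
    using assms(2) eventually_riccati
  proof eventually_elim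
    case (elim x)
    then have "(1 - x\<^sup>2) * - U' x \<le> -\<kappa>" by simp
    with elim show ?case
      using le_neg_inverse_if_weighted_le[of x "- U' x" \<kappa>] \<open>\<kappa> > 0\<close>
      by (auto intro: derivative_intros)
  qed
qed (use assms in simp)

lemma not_eventually_ge_bound: "\<not> (\<forall>\<^sub>F x in at_right (-1). bound \<le> U x)"
proof
  assume large: "\<forall>\<^sub>F x in at_right (-1). bound \<le> U x"
  have "\<forall>\<^sub>F x in at_right (-1). ((\<lambda>x. -1 / U x) has_real_derivative U' x / (U x)\<^sup>2) (at x) \<and>
      U' x / (U x)\<^sup>2 \<le> -(1/8) / (x - -1)"
    using large eventually_riccati eventually_rhs_le_neg_quarter_square
  proof eventually_elim
    case (elim x)
    have "U x > 0" using elim bound_ge_8 by linarith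
    have "U' x \<le> -((U x)\<^sup>2 / 8) / (x + 1)"
      using le_neg_inverse_if_weighted_le[of x "U' x" "(U x)\<^sup>2 / 4"] elim \<open>U x > 0\<close> by auto
    then have "U' x / (U x)\<^sup>2 \<le> -(1/8) / (x + 1)"
      using \<open>U x > 0\<close> by (simp add: divide_simps)
    moreover have "((\<lambda>x. -1 / U x) has_real_derivative U' x / (U x)\<^sup>2) (at x)"
      using elim \<open>U x > 0\<close> by (auto intro!: derivative_eq_intros simp: power2_eq_square)
    ultimately show ?case by simp
  qed
  then have "filterlim (\<lambda>x. -1 / U x) at_top (at_right (-1))"
    by (rule filterlim_at_top_if_deriv_le_neg_inverse[rotated]) simp
  then have "\<forall>\<^sub>F x in at_right (-1). 0 < -1 / U x"
    unfolding filterlim_at_top_dense by blast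
  then obtain x where "0 < -1 / U x" "bound \<le> U x"
    using eventually_happens'[OF trivial_limit_at_right_real eventually_conj[OF _ large]] by blast
  with bound_ge_8 show False by (simp add: divide_less_0_iff)
qed

lemma not_eventually_le_neg_bound: "\<not> (\<forall>\<^sub>F x in at_right (-1). U x \<le> - bound)"
proof
  assume small: "\<forall>\<^sub>F x in at_right (-1). U x \<le> - bound"
  have "\<forall>\<^sub>F x in at_right (-1). rhs x (U x) \<le> -1"
    using small eventually_rhs_le_neg_quarter_square
  proof eventually_elim
    case (elim x)
    then have "bound \<le> \<bar>U x\<bar>" "8 \<le> \<bar>U x\<bar>" using bound_ge_8 by auto
    then have "rhs x (U x) \<le> - (U x)\<^sup>2 / 4" "64 \<le> (U x)\<^sup>2"
      using elim(2) power_mono[of 8 "\<bar>U x\<bar>" 2] by auto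
    then show ?case by linarith
  qed
  then have "filterlim U at_top (at_right (-1))"
    by (rule filterlim_at_top_if_rhs_le[rotated]) simp
  then have "\<forall>\<^sub>F x in at_right (-1). - bound < U x"
    unfolding filterlim_at_top_dense by blast
  then obtain x where "- bound < U x" "U x \<le> - bound"
    using eventually_happens'[OF trivial_limit_at_right_real eventually_conj[OF _ small]] by blast
  then show False by simp
qed

lemma eventually_le_or_ge:
  assumes "boundary_quadratic c1 v \<noteq> 0"
  shows "(\<forall>\<^sub>F x in at_right (-1). U x \<le> v) \<or> (\<forall>\<^sub>F x in at_right (-1). v \<le> U x)"
proof (cases "boundary_quadratic c1 v > 0")
  case True
  with tendsto_rhs[OF tendsto_const] have "\<forall>\<^sub>F x in at_right (-1). rhs x v > 0"
    by (rule order_tendstoD)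
  with eventually_riccati
  have "\<forall>\<^sub>F x in at_right (-1). (U has_real_derivative U' x) (at x) \<and> (U x = v \<longrightarrow> U' x > 0)"
  proof eventually_elim
    case (elim x)
    then have "0 < 1 - x\<^sup>2" by (simp add: abs_square_less_1)
    then have "U' x = rhs x (U x) / (1 - x\<^sup>2)" using elim by (simp add: field_simps)
    with elim \<open>0 < 1 - x\<^sup>2\<close> show ?case by (auto simp: zero_less_divide_iff)
  qed
  then show ?thesis by (rule eventually_le_or_ge_if_deriv_pos_at_level)
next
  case False
  with assms have "boundary_quadratic c1 v < 0" by simp
  with tendsto_rhs[OF tendsto_const] have "\<forall>\<^sub>F x in at_right (-1). rhs x v < 0"
    by (rule order_tendstoD)
  with eventually_riccati
  have "\<forall>\<^sub>F x in at_right (-1). (U has_real_derivative U' x) (at x) \<and> (U x = v \<longrightarrow> U' x < 0)"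
  proof eventually_elim
    case (elim x)
    then have "0 < 1 - x\<^sup>2" by (simp add: abs_square_less_1)
    then have "U' x = rhs x (U x) / (1 - x\<^sup>2)" using elim by (simp add: field_simps)
    with elim \<open>0 < 1 - x\<^sup>2\<close> show ?case by (auto simp: divide_less_0_iff)
  qed
  then show ?thesis by (rule eventually_le_or_ge_if_deriv_neg_at_level)
qed

lemma ex_limit: "\<exists>L. (U \<longlongrightarrow> L) (at_right (-1))"
proof (rule tendsto_if_eventually_le_or_ge)
  show "finite {tau1 c1, tau2 c1}" by simp
  show "(\<forall>\<^sub>F x in at_right (-1). U x \<le> v) \<or> (\<forall>\<^sub>F x in at_right (-1). v \<le> U x)"
    if "v \<notin> {tau1 c1, tau2 c1}" for v
    using that boundary_quadratic_root eventually_le_or_ge by blast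
  have "boundary_quadratic c1 bound \<noteq> 0" "boundary_quadratic c1 (- bound) \<noteq> 0"
    using boundary_quadratic_neg[of bound] boundary_quadratic_neg[of "- bound"] bound_ge_8 by auto
  then show "\<forall>\<^sub>F x in at_right (-1). U x \<le> bound" "\<forall>\<^sub>F x in at_right (-1). - bound \<le> U x"
    using eventually_le_or_ge not_eventually_ge_bound not_eventually_le_neg_bound by blast+
qed simp

lemma boundary_quadratic_limit_eq_0:
  assumes lim: "(U \<longlongrightarrow> L) (at_right (-1))"
  shows "boundary_quadratic c1 L = 0"
proof (rule ccontr)
  assume "boundary_quadratic c1 L \<noteq> 0"
  then consider "boundary_quadratic c1 L < 0" | "boundary_quadratic c1 L > 0" by linarith
  then show False
  proof cases
    case 1
    then have "\<forall>\<^sub>F x in at_right (-1). rhs x (U x) \<le> - (- boundary_quadratic c1 L / 2)"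
      using order_tendstoD(2)[OF tendsto_rhs[OF lim], of "boundary_quadratic c1 L / 2"]
      by (auto elim: eventually_mono)
    then have "filterlim U at_top (at_right (-1))"
      by (rule filterlim_at_top_if_rhs_le[rotated]) (use 1 in simp)
    with lim show False
      by (meson filterlim_at_top_imp_at_infinity not_tendsto_and_filterlim_at_infinity trivial_limit_at_right_real)
  next
    case 2
    then have "\<forall>\<^sub>F x in at_right (-1). boundary_quadratic c1 L / 2 \<le> rhs x (U x)"
      using order_tendstoD(1)[OF tendsto_rhs[OF lim], of "boundary_quadratic c1 L / 2"]
      by (auto elim: eventually_mono)
    then have "filterlim (\<lambda>x. - U x) at_top (at_right (-1))"
      by (rule filterlim_neg_at_top_if_rhs_ge[rotated]) (use 2 in simp)
    with tendsto_minus[OF lim] show False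
      by (meson filterlim_at_top_imp_at_infinity not_tendsto_and_filterlim_at_infinity trivial_limit_at_right_real)
  qed
qed

end

theorem lemma2p1:
  fixes \<delta> c1 c2 c3 :: real and U U' :: "real \<Rightarrow> real"
  assumes "\<delta> > 0"
    and deriv: "\<And>x. x \<in> {-1<..<-1+\<delta>} \<Longrightarrow> (U has_real_derivative U' x) (at x)"
    and cont: "continuous_on {-1<..<-1+\<delta>} U'"
    and ode: "\<And>x. x \<in> {-1<..<-1+\<delta>} \<Longrightarrow>
               (1 - x\<^sup>2) * U' x + 2 * x * U x + 1/2 * (U x)\<^sup>2 = P c1 c2 c3 x"
  shows "c1 \<ge> -1 \<and> (\<exists>L. (U \<longlongrightarrow> L) (at_right (-1)) \<and> (L = tau1 c1 \<or> L = tau2 c1))"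
proof -
  interpret riccati_near_minus_one \<delta> c1 c2 c3 U U'
    using \<open>\<delta> > 0\<close> deriv ode by unfold_locales
  obtain L where "(U \<longlongrightarrow> L) (at_right (-1))"
    using ex_limit by blast
  with boundary_quadratic_limit_eq_0 boundary_quadratic_root show ?thesis by blast
qed

end
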